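(* Let $m,n$ be indeterminates and work in the ring of formal power series $\mathbb{Q}[m,n][[x]]$. Let $$f(x)=\sum_{k\ge 0}(-1)^k\, m(m+n)(m+2n)\cdots(m+(k-1)n)\,x^k = 1-mx+m(m+n)x^2-m(m+n)(m+2n)x^3+\cdots$$ (the empty product for $k=0$ being $1$). Define $c_{2j-1}=(m+(j-1)n)x$ and $c_{2j}=jn\,x$ for $j\ge 1$, so that $c_1=mx,\ c_2=nx,\ c_3=(m+n)x,\ c_4=2nx,\ c_5=(m+2n)x,\dots$, and for $N\ge 1$ let $$K_N=\cfrac{1}{1+\cfrac{c_1}{1+\cfrac{c_2}{1+\cdots+\cfrac{c_N}{1}}}}.$$ Then each $K_N$ is a rational function in $x$ whose expansion is a power series in $\mathbb{Q}[m,n][[x]]$, and $K_N\equiv f(x)\pmod{x^{N+1}}$. Consequently $K_N\to f$ in the $x$-adic topology, i.e. $f$ equals the infinite continued fraction $$f=\cfrac{1}{1+\cfrac{mx}{1+\cfrac{nx}{1+\cfrac{(m+n)x}{1+\cfrac{2nx}{1+\cfrac{(m+2n)x}{1+\cfrac{3nx}{1+\cdots}}}}}}}$$ in this formal sense.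
   Context: The series $f$ is divergent for every nonzero numerical $x$ (unless $m=0$), so the identity is understood as an identity of formal power series: the finite truncations $K_N$ of the continued fraction, expanded as power series in $x$, agree with $f$ up to and including the coefficient of $x^N$. *)

theory Defs
  imports "HOL-Computational_Algebra.Formal_Power_Series"
          "HOL-Computational_Algebra.Polynomial"
          "HOL-Computational_Algebra.Fraction_Field"
begin

text \<open>The coefficient ring Q[m,n] is represented as (Q[m])[n] = rat poly poly.
  The indeterminate m is the inner variable (a constant w.r.t. the outer variable),
  n is the outer variable.\<close>

type_synonym qmn = "rat poly poly"

definition mvar :: qmn where "mvar = [:[:0, 1:]:]"
definition nvar :: qmn where "nvar = [:0, 1:]"

definition f_ser :: "qmn fps" where
  "f_ser = Abs_fps (\<lambda>k. (-1) ^ k * (\<Prod>i<k. mvar + of_nat i * nvar))"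

text \<open>The coefficients: c_(2j-1) = m+(j-1)n, c_(2j) = j n (the factor x is added below).\<close>
definition cf_c :: "nat \<Rightarrow> qmn" where
  "cf_c j = (if odd j then mvar + of_nat ((j - 1) div 2) * nvar else of_nat (j div 2) * nvar)"

text \<open>Continued fractions are computed in the power series ring over the fraction
  field of Q[m,n] (so that K_N, a rational function in x, is represented by its expansion).
  cf_den [a1,...,ar] = 1 + a1 x/(1 + a2 x/(... (1 + ar x/1))).\<close>
fun cf_den :: "qmn list \<Rightarrow> qmn fract fps" where
  "cf_den [] = 1"
| "cf_den (a # as) = 1 + fps_const (Fract a 1) * fps_X * inverse (cf_den as)"

definition K :: "nat \<Rightarrow> qmn fract fps" where
  "K N = inverse (cf_den (map cf_c [1..<N+1]))"

definition fps_to_fract :: "qmn fps \<Rightarrow> qmn fract fps" where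
  "fps_to_fract g = Abs_fps (\<lambda>k. Fract (fps_nth g k) 1)"

end

theory Submission imports Defs begin

(*
  f is the hypergeometric series 2F0(m/n, 1; -nx) and the continued fraction is
  Gauss's continued fraction for a ratio of contiguous 2F0 series.  We use the
  two-parameter family
     F_{j,b} = sum_k (-1)^k (m+jn)(m+(j+1)n)...(m+(j+k-1)n) C(b+k-1, k) x^k,
  which satisfies a contiguity relation in b and one in j.  Interleaving them,
  h_t = F_{t div 2, (t+1) div 2} obeys h_t = h_{t+1} + c_{t+1} x h_{t+2} with
  h_0 = 1 and h_1 = f, so E_t = h_t / h_{t+1} satisfies E_t = 1 + c_{t+1} x / E_{t+1}.
  Unfolding this d times, E_t agrees with 1 + c_{t+1}x/(1 + ... + c_{t+d}x/1)
  modulo x^(d+1); for t = 0 this gives K_N == 1/E_0 = f modulo x^(N+1).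
*)


lemma fps_to_fract_nth [simp]: "fps_nth (fps_to_fract g) k = Fract (fps_nth g k) 1"
  by (simp add: fps_to_fract_def)

lemma Fract_add_1: "Fract (a + b) 1 = Fract a 1 + Fract (b :: 'a :: idom) 1"
  by simp

lemma Fract_sum_1: "Fract (sum f S) 1 = (\<Sum>i\<in>S. Fract (f i :: 'a :: idom) 1)"
  by (induction S rule: infinite_finite_induct) (simp_all add: fract_collapse Fract_add_1)

lemma fps_to_fract_add: "fps_to_fract (a + b) = fps_to_fract a + fps_to_fract b"
  by (rule fps_ext) simp

lemma fps_to_fract_mult: "fps_to_fract (a * b) = fps_to_fract a * fps_to_fract b"
  by (rule fps_ext) (simp add: fps_mult_nth Fract_sum_1)

lemma fps_to_fract_1: "fps_to_fract 1 = 1"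
  by (rule fps_ext) (simp add: fract_collapse)

lemma fps_to_fract_X: "fps_to_fract fps_X = fps_X"
  by (rule fps_ext) (simp add: fract_collapse fps_X_def)

lemma fps_to_fract_const: "fps_to_fract (fps_const a) = fps_const (Fract a 1)"
  by (rule fps_ext) (simp add: fract_collapse)

lemma fps_to_fract_inverse:
  assumes "fps_nth d 0 = 1"
  shows "inverse (fps_to_fract d) = fps_to_fract (fps_right_inverse d 1)"
proof (rule fps_inverse_unique)
  show "fps_to_fract d * fps_to_fract (fps_right_inverse d 1) = 1"
    by (simp add: fps_to_fract_mult[symmetric] fps_right_inverse assms fps_to_fract_1)
qed


section \<open>Integrality of the finite continued fractions\<close>

lemma cf_den_nth_0 [simp]: "fps_nth (cf_den as) 0 = 1"
  by (cases as) auto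

lemma cf_den_integral: "\<exists>d. cf_den as = fps_to_fract d \<and> fps_nth d 0 = 1"
proof (induction as)
  case Nil
  show ?case by (intro exI[of _ 1]) (simp add: fps_to_fract_1)
next
  case (Cons a as)
  then obtain d where d: "cf_den as = fps_to_fract d" "fps_nth d 0 = 1" by blast
  show ?case
    by (intro exI[of _ "1 + fps_const a * fps_X * fps_right_inverse d 1"])
       (simp add: d fps_to_fract_inverse fps_to_fract_add fps_to_fract_mult
                  fps_to_fract_1 fps_to_fract_X fps_to_fract_const)
qed


lemma fps_X_power_dvd_nth:
  assumes "fps_X ^ n dvd f" and "k < n"
  shows "fps_nth f k = 0"
proof -
  from assms(1) obtain q where "f = fps_X ^ n * q" by (elim dvdE)
  with assms(2) show ?thesis by (simp add: fps_X_power_mult_nth)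
qed

lemma fps_inverse_diff:
  fixes a b :: "'a :: field fps"
  assumes "fps_nth a 0 \<noteq> 0" "fps_nth b 0 \<noteq> 0"
  shows "inverse a - inverse b = inverse a * inverse b * (b - a)"
proof -
  have "inverse a * inverse b * (b - a) = inverse a * (inverse b * b) - inverse b * (inverse a * a)"
    by (simp add: algebra_simps)
  also have "\<dots> = inverse a - inverse b"
    using assms by (simp add: inverse_mult_eq_1)
  finally show ?thesis by simp
qed

lemma fps_inverse_cong:
  fixes a b :: "'a :: field fps"
  assumes "fps_X ^ n dvd a - b" "fps_nth a 0 \<noteq> 0" "fps_nth b 0 \<noteq> 0"
  shows "fps_X ^ n dvd inverse b - inverse a"
proof -
  have "inverse b - inverse a = inverse b * inverse a * (a - b)"
    by (rule fps_inverse_diff[OF assms(3,2)])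
  with assms(1) show ?thesis by simp
qed


section \<open>Three-term recurrences and continued fractions\<close>

lemma three_term_recurrence_quotient:
  fixes h :: "nat \<Rightarrow> 'a :: field fps" and a :: "nat \<Rightarrow> 'a fps"
  assumes rec: "h t = h (Suc t) + a (Suc t) * fps_X * h (Suc (Suc t))"
    and nz: "fps_nth (h (Suc t)) 0 \<noteq> 0" "fps_nth (h (Suc (Suc t))) 0 \<noteq> 0"
  shows "h t * inverse (h (Suc t))
           = 1 + a (Suc t) * fps_X * inverse (h (Suc t) * inverse (h (Suc (Suc t))))"
proof -
  have "1 + a (Suc t) * fps_X * inverse (h (Suc t) * inverse (h (Suc (Suc t))))
      = inverse (h (Suc t)) * (h (Suc t) + a (Suc t) * fps_X * h (Suc (Suc t)))"
    using nz by (simp add: fps_inverse_mult algebra_simps inverse_mult_eq_1 inverse_mult_eq_1')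
  also have "\<dots> = h t * inverse (h (Suc t))"
    unfolding rec[symmetric] by (rule mult.commute)
  finally show ?thesis by simp
qed

lemma cf_den_tail_cong:
  fixes E :: "nat \<Rightarrow> qmn fract fps" and c :: "nat \<Rightarrow> qmn"
  assumes rec: "\<And>t. E t = 1 + fps_const (Fract (c (Suc t)) 1) * fps_X * inverse (E (Suc t))"
    and nz: "\<And>t. fps_nth (E t) 0 \<noteq> 0"
  shows "fps_X ^ Suc d dvd E t - cf_den (map c [Suc t..<Suc t + d])"
proof (induction d arbitrary: t)
  case 0
  have "E t - cf_den [] = fps_const (Fract (c (Suc t)) 1) * fps_X * inverse (E (Suc t))"
    by (subst rec) simp
  then show ?case by simp
next
  case (Suc d)
  let ?C = "fps_const (Fract (c (Suc t)) 1)"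
  define D where "D = cf_den (map c [Suc (Suc t)..<Suc (Suc t) + d])"
  have "[Suc t..<Suc t + Suc d] = Suc t # [Suc (Suc t)..<Suc (Suc t) + d]"
    by (simp add: upt_conv_Cons)
  then have unfold: "cf_den (map c [Suc t..<Suc t + Suc d]) = 1 + ?C * fps_X * inverse D"
    by (simp only: list.map cf_den.simps D_def)
  have "fps_X ^ Suc d dvd inverse D - inverse (E (Suc t))"
    using Suc.IH[of "Suc t"] nz by (intro fps_inverse_cong) (simp_all add: D_def)
  then have "fps_X * fps_X ^ Suc d dvd (?C * fps_X) * (inverse (E (Suc t)) - inverse D)"
    by (intro mult_dvd_mono) (simp_all add: dvd_diff_commute)
  moreover have "E t - cf_den (map c [Suc t..<Suc t + Suc d])
                   = (?C * fps_X) * (inverse (E (Suc t)) - inverse D)"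
    unfolding unfold by (subst rec[of t]) (simp add: algebra_simps)
  ultimately show ?case by simp
qed


section \<open>A family of contiguous hypergeometric series\<close>

definition rising :: "'a :: comm_ring_1 \<Rightarrow> 'a \<Rightarrow> nat \<Rightarrow> nat \<Rightarrow> 'a" where
  "rising m n j k = (\<Prod>i<k. m + of_nat (j + i) * n)"

text \<open>F_{j,b} = sum_k (-1)^k rising m n j k * C(b+k-1, k) x^k, i.e. the series
  2F0(m/n + j, b; -nx) written without division.\<close>

definition hyp_ser :: "'a :: comm_ring_1 \<Rightarrow> 'a \<Rightarrow> nat \<Rightarrow> nat \<Rightarrow> 'a fps" where
  "hyp_ser m n j b = Abs_fps (\<lambda>k. (-1) ^ k * rising m n j k * of_nat ((b + k - 1) choose k))"

lemma rising_Suc_left: "rising m n j (Suc k) = (m + of_nat j * n) * rising m n (Suc j) k"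
  unfolding rising_def by (subst prod.lessThan_Suc_shift) simp

lemma rising_Suc_right: "rising m n j (Suc k) = rising m n j k * (m + of_nat (j + k) * n)"
  unfolding rising_def by simp

lemma hyp_ser_nth_0 [simp]: "fps_nth (hyp_ser m n j b) 0 = 1"
  by (simp add: hyp_ser_def rising_def)

lemma const_X_times_nth_0 [simp]:
  "fps_nth (fps_const (c :: 'a :: comm_ring_1) * fps_X * g) 0 = 0"
  by (simp add: mult.assoc)

lemma const_X_times_nth_Suc [simp]:
  "fps_nth (fps_const (c :: 'a :: comm_ring_1) * fps_X * g) (Suc k) = c * fps_nth g k"
  by (simp add: mult.assoc)

text \<open>Contiguity relation in b; coefficientwise it is Pascal's rule.\<close>

lemma hyp_ser_shift_b:
  "hyp_ser m n j b
     = hyp_ser m n j (Suc b) + fps_const (m + of_nat j * n) * fps_X * hyp_ser m n (Suc j) (Suc b)"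
proof (rule fps_ext)
  fix k
  show "fps_nth (hyp_ser m n j b) k = fps_nth (hyp_ser m n j (Suc b)
          + fps_const (m + of_nat j * n) * fps_X * hyp_ser m n (Suc j) (Suc b)) k"
  proof (cases k)
    case (Suc s)
    have pascal: "(b + s + 1 choose Suc s) = (b + s choose s) + (b + s choose Suc s)"
      by simp
    show ?thesis
      by (simp add: Suc hyp_ser_def rising_Suc_left pascal algebra_simps)
  qed simp
qed

text \<open>Contiguity relation in j; coefficientwise it is the absorption identity
  (s+1) C(b+s, s+1) = b C(b+s, s).\<close>

lemma hyp_ser_shift_j:
  "hyp_ser m n j b
     = hyp_ser m n (Suc j) b + fps_const (of_nat b * n) * fps_X * hyp_ser m n (Suc j) (Suc b)"
proof (rule fps_ext)
  fix k
  show "fps_nth (hyp_ser m n j b) k = fps_nth (hyp_ser m n (Suc j) b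
          + fps_const (of_nat b * n) * fps_X * hyp_ser m n (Suc j) (Suc b)) k"
  proof (cases k)
    case (Suc s)
    have absorb: "Suc s * (b + s choose Suc s) = b * (b + s choose s)"
    proof (cases b)
      case (Suc b')
      then show ?thesis
        using Suc_times_binomial_add[of s b'] by (simp add: add.commute del: binomial_Suc_Suc)
    qed simp
    define R where "R = rising m n (Suc j) s"
    define B where "B = (of_nat (b + s choose Suc s) :: 'a)"
    define C where "C = (of_nat (b + s choose s) :: 'a)"
    have "(m + of_nat j * n) * R * B
            = R * (m + of_nat (Suc j + s) * n) * B - (of_nat (Suc s) * B) * n * R"
      by (simp add: algebra_simps)
    also have "of_nat (Suc s) * B = of_nat b * C"
      unfolding B_def C_def by (metis absorb of_nat_mult)
    finally have key: "(m + of_nat j * n) * R * B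
                         = R * (m + of_nat (Suc j + s) * n) * B - of_nat b * C * n * R" .
    have "fps_nth (hyp_ser m n j b) k = - ((-1) ^ s * ((m + of_nat j * n) * R * B))"
      by (simp add: Suc hyp_ser_def rising_Suc_left R_def B_def)
    also have "\<dots> = - ((-1) ^ s * (R * (m + of_nat (Suc j + s) * n) * B))
                     + of_nat b * n * ((-1) ^ s * R * C)"
      by (subst key) (simp add: algebra_simps)
    also have "\<dots> = fps_nth (hyp_ser m n (Suc j) b
                     + fps_const (of_nat b * n) * fps_X * hyp_ser m n (Suc j) (Suc b)) k"
      by (simp add: Suc hyp_ser_def rising_Suc_right R_def B_def C_def)
    finally show ?thesis .
  qed simp
qed


definition tail_ser :: "nat \<Rightarrow> qmn fps" where
  "tail_ser t = hyp_ser mvar nvar (t div 2) ((t + 1) div 2)"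

lemma tail_ser_0: "tail_ser 0 = 1"
proof (rule fps_ext)
  fix k show "fps_nth (tail_ser 0) k = fps_nth 1 k"
    by (cases k) (simp_all add: tail_ser_def hyp_ser_def rising_def)
qed

lemma tail_ser_1: "tail_ser 1 = f_ser"
  by (rule fps_ext) (simp add: tail_ser_def hyp_ser_def rising_def f_ser_def)

lemma tail_ser_rec:
  "tail_ser t = tail_ser (Suc t) + fps_const (cf_c (Suc t)) * fps_X * tail_ser (Suc (Suc t))"
proof (cases "even t")
  case True
  then obtain j where "t = 2 * j" by (elim evenE)
  then show ?thesis
    using hyp_ser_shift_b[of mvar nvar j j] by (simp add: tail_ser_def cf_c_def)
next
  case False
  then obtain j where "t = 2 * j + 1" by (elim oddE)
  then show ?thesis
    using hyp_ser_shift_j[of mvar nvar j "Suc j"] by (simp add: tail_ser_def cf_c_def)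
qed

lemma K_cong: "fps_X ^ Suc N dvd K N - fps_to_fract f_ser"
proof -
  define H where "H t = fps_to_fract (tail_ser t)" for t
  define E where "E t = H t * inverse (H (Suc t))" for t
  have H_nz: "fps_nth (H t) 0 \<noteq> 0" for t
    by (simp add: H_def tail_ser_def fract_collapse)
  have H_rec: "H t = H (Suc t) + fps_const (Fract (cf_c (Suc t)) 1) * fps_X * H (Suc (Suc t))" for t
    unfolding H_def
    by (subst tail_ser_rec) (simp add: fps_to_fract_add fps_to_fract_mult fps_to_fract_const fps_to_fract_X)
  have E_rec: "E t = 1 + fps_const (Fract (cf_c (Suc t)) 1) * fps_X * inverse (E (Suc t))" for t
    unfolding E_def
    by (rule three_term_recurrence_quotient[where a = "\<lambda>k. fps_const (Fract (cf_c k) 1)"])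
       (rule H_rec H_nz)+
  have E_nz: "fps_nth (E t) 0 \<noteq> 0" for t
    using H_nz by (simp add: E_def)
  have "fps_X ^ Suc N dvd E 0 - cf_den (map cf_c [1..<N + 1])"
    using cf_den_tail_cong[of E cf_c, OF E_rec E_nz, of N 0] by simp
  then have "fps_X ^ Suc N dvd inverse (cf_den (map cf_c [1..<N + 1])) - inverse (E 0)"
    using E_nz by (intro fps_inverse_cong) simp_all
  moreover have "inverse (E 0) = H 1"
    using H_nz[of 1] by (simp add: E_def H_def tail_ser_0 fps_to_fract_1 fps_inverse_idempotent)
  moreover have "H 1 = fps_to_fract f_ser"
    unfolding H_def tail_ser_1 ..
  ultimately show ?thesis by (simp add: K_def)
qed

lemma K_nth: "k \<le> N \<Longrightarrow> fps_nth (K N) k = fps_nth (fps_to_fract f_ser) k"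
  using fps_X_power_dvd_nth[OF K_cong, of k N] by simp


theorem mainTheorem1:
  shows "(\<forall>N\<ge>1. (\<exists>g :: qmn fps. K N = fps_to_fract g \<and> (\<forall>k\<le>N. fps_nth g k = fps_nth f_ser k)))
         \<and> (K \<longlonglongrightarrow> fps_to_fract f_ser)"
proof
  show "\<forall>N\<ge>1. \<exists>g :: qmn fps. K N = fps_to_fract g \<and> (\<forall>k\<le>N. fps_nth g k = fps_nth f_ser k)"
  proof (intro allI impI)
    fix N :: nat
    obtain d where d: "cf_den (map cf_c [1..<N + 1]) = fps_to_fract d" "fps_nth d 0 = 1"
      using cf_den_integral by blast
    define g where "g = fps_right_inverse d 1"
    have "K N = fps_to_fract g"
      unfolding K_def d(1) g_def by (rule fps_to_fract_inverse[OF d(2)])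
    moreover have "\<forall>k\<le>N. fps_nth g k = fps_nth f_ser k"
      using K_nth[of _ N] by (simp add: \<open>K N = fps_to_fract g\<close> eq_fract)
    ultimately show "\<exists>g. K N = fps_to_fract g \<and> (\<forall>k\<le>N. fps_nth g k = fps_nth f_ser k)"
      by blast
  qed
  show "K \<longlonglongrightarrow> fps_to_fract f_ser"
    by (rule tendsto_fpsI, rule eventually_sequentiallyI) (rule K_nth)
qed

end
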